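(* Let $B$ be an extremal finite Blaschke product of degree $n$ (i.e. $m(B)=\frac{n}{M(B)-n+1}$ (first kind) or $m(B)=n-1+\frac{n}{M(B)}$ (second kind)), and let $\nu=M(B)-n$ in the first case and $\nu=m(B)-n$ in the second. Then there exist $\lambda\in\mathbb T$ and distinct points $z_0,z_1,\dots,z_n\in\mathbb T$ such that: (a) $z_kB(z_k)=\lambda$ for $k=0,\dots,n$; (b) $|B'(z_0)|=\frac{n}{\nu+1}$; (c) $|B'(z_k)|=n+\nu$ for $k=1,\dots,n$.
   Context: A finite Blaschke product of degree $n$ is $B(z)=\alpha\prod_{k=1}^n \frac{z-a_k}{1-\overline{a_k}z}$ with $a_k\in\mathbb D=\{|z|<1\}$, $\alpha\in\mathbb T=\{|z|=1\}$; $M(B)=\sup_{|z|=1}|B'(z)|$, $m(B)=\inf_{|z|=1}|B'(z)|$. *)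

theory Defs
  imports "HOL-Analysis.Analysis"
begin

definition is_blaschke :: "(complex \<Rightarrow> complex) \<Rightarrow> nat \<Rightarrow> bool" where
  "is_blaschke B n \<longleftrightarrow>
     (\<exists>\<alpha> a. cmod \<alpha> = 1 \<and> (\<forall>k<n. a k \<in> ball 0 1) \<and>
        B = (\<lambda>z. \<alpha> * (\<Prod>k<n. (z - a k) / (1 - cnj (a k) * z))))"

definition Mmax :: "(complex \<Rightarrow> complex) \<Rightarrow> real" where
  "Mmax B = (SUP z\<in>sphere 0 1. cmod (deriv B z))"

definition mmin :: "(complex \<Rightarrow> complex) \<Rightarrow> real" where
  "mmin B = (INF z\<in>sphere 0 1. cmod (deriv B z))"

definition extremal_points :: "(complex \<Rightarrow> complex) \<Rightarrow> nat \<Rightarrow> real \<Rightarrow> bool" where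
  "extremal_points B n \<nu> \<longleftrightarrow>
     (\<exists>lam z. cmod lam = 1 \<and> inj_on z {0..n} \<and>
        (\<forall>k\<le>n. cmod (z k) = 1 \<and> z k * B (z k) = lam) \<and>
        cmod (deriv B (z 0)) = real n / (\<nu> + 1) \<and>
        (\<forall>k\<in>{1..n}. cmod (deriv B (z k)) = real n + \<nu>))"

end

theory Submission
  imports Defs "HOL-Computational_Algebra.Fundamental_Theorem_Algebra"
begin

text \<open>For every unimodular lam the equation z B(z) = lam has exactly n + 1 solutions, all simple and
  on the unit circle, and the weights 1 / (1 + |B'(z)|) over them sum to 1; this comes from Lagrange
  interpolation of the denominator of B at the roots of z B(z) - lam. Take lam such that the
  solutions contain a point where |B'| attains m(B) (first kind) or M(B) (second kind). The other n
  weights are each at least 1 / (1 + M(B)), resp. at most 1 / (1 + m(B)), and the extremality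
  hypothesis says precisely that these bounds add up to the total weight, so each is attained.\<close>

lemma poly_eq_lagrange_interpolation:
  fixes F :: "'a::field poly"
  assumes S: "finite S" and deg: "degree F < card S"
  shows "poly F x = (\<Sum>y\<in>S. poly F y * (\<Prod>z\<in>S-{y}. (x - z) / (y - z)))"
proof -
  define G where "G = (\<Sum>y\<in>S. smult (poly F y) (\<Prod>z\<in>S-{y}. smult (1/(y-z)) [:-z,1:]))"
  have poly_G: "poly G x = (\<Sum>y\<in>S. poly F y * (\<Prod>z\<in>S-{y}. (x - z) / (y - z)))" for x
    by (simp add: G_def poly_sum poly_prod diff_divide_distrib)
  have deg_G: "degree G \<le> card S - 1"
    unfolding G_def
  proof (rule degree_sum_le[OF S])
    fix y assume y: "y \<in> S"
    have "degree (\<Prod>z\<in>S-{y}. smult (1/(y-z)) [:-z,1:])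
          \<le> (\<Sum>z\<in>S-{y}. degree (smult (1/(y-z)) [:-z,1:]))"
      using degree_prod_sum_le[of "S-{y}" "\<lambda>z. smult (1/(y-z)) [:-z,1:]"] S by (simp add: o_def)
    also have "\<dots> \<le> (\<Sum>z\<in>S-{y}. 1)"
      by (intro sum_mono) (simp add: degree_smult_le)
    also have "\<dots> = card S - 1" using S y by simp
    finally show "degree (smult (poly F y) (\<Prod>z\<in>S-{y}. smult (1/(y-z)) [:-z,1:])) \<le> card S - 1"
      by (rule order_trans[OF degree_smult_le])
  qed
  have agree: "poly G x = poly F x" if x: "x \<in> S" for x
  proof -
    have "poly G x = poly F x * (\<Prod>z\<in>S-{x}. (x - z) / (x - z))
        + (\<Sum>y\<in>S-{x}. poly F y * (\<Prod>z\<in>S-{y}. (x - z) / (y - z)))"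
      unfolding poly_G by (rule sum.remove[OF S x])
    also have "(\<Prod>z\<in>S-{x}. (x - z) / (x - z)) = 1"
      by (rule prod.neutral) auto
    also have "(\<Sum>y\<in>S-{x}. poly F y * (\<Prod>z\<in>S-{y}. (x - z) / (y - z))) = 0"
    proof (rule sum.neutral, rule ballI)
      fix y assume "y \<in> S - {x}"
      then have "(\<Prod>z\<in>S-{y}. (x - z) / (y - z)) = 0"
        using S x by (intro prod_zero) auto
      then show "poly F y * (\<Prod>z\<in>S-{y}. (x - z) / (y - z)) = 0" by simp
    qed
    finally show ?thesis by simp
  qed
  have "F - G = 0"
  proof (rule ccontr)
    assume nz: "F - G \<noteq> 0"
    have "card S \<le> card {x. poly (F - G) x = 0}"
      using agree poly_roots_finite[OF nz] by (intro card_mono) auto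
    also have "\<dots> \<le> degree (F - G)" by (rule card_poly_roots_bound[OF nz])
    also have "\<dots> \<le> max (degree F) (degree G)" by (rule degree_diff_le_max)
    finally show False using deg deg_G by linarith
  qed
  then show ?thesis using poly_G[of x] by simp
qed

lemma sum_mono_imp_eq:
  fixes f g :: "'a \<Rightarrow> real"
  assumes "finite A" and "\<And>y. y \<in> A \<Longrightarrow> f y \<le> g y" and "sum g A \<le> sum f A" and "y \<in> A"
  shows "f y = g y"
proof (rule ccontr)
  assume "f y \<noteq> g y"
  with assms have "sum f A < sum g A"
    by (intro sum_strict_mono_ex1) (auto intro!: bexI[of _ y] simp: order_less_le)
  with assms(3) show False by simp
qed

lemma continuous_attains_INF_SUP:
  fixes f :: "'a::topological_space \<Rightarrow> 'b::{linorder_topology, conditionally_complete_linorder}"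
  assumes "compact S" "S \<noteq> {}" "continuous_on S f"
  shows "\<exists>x\<in>S. f x = (INF y\<in>S. f y) \<and> (\<forall>y\<in>S. f x \<le> f y)"
    and "\<exists>x\<in>S. f x = (SUP y\<in>S. f y) \<and> (\<forall>y\<in>S. f y \<le> f x)"
proof -
  obtain x where "x \<in> S" "\<forall>y\<in>S. f x \<le> f y"
    using continuous_attains_inf[OF assms] by blast
  then show "\<exists>x\<in>S. f x = (INF y\<in>S. f y) \<and> (\<forall>y\<in>S. f x \<le> f y)"
    by (intro bexI[of _ x]) (auto intro!: cInf_eq_minimum[symmetric])
  obtain x where "x \<in> S" "\<forall>y\<in>S. f y \<le> f x"
    using continuous_attains_sup[OF assms] by blast
  then show "\<exists>x\<in>S. f x = (SUP y\<in>S. f y) \<and> (\<forall>y\<in>S. f y \<le> f x)"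
    by (intro bexI[of _ x]) (auto intro!: cSup_eq_maximum[symmetric])
qed

subsection \<open>Blaschke factors\<close>

lemma complex_of_real_norm_square: "(complex_of_real (cmod z))\<^sup>2 = z * cnj z"
  by (metis complex_norm_square of_real_power)

lemma blaschke_factor_norm_identity:
  fixes a y :: complex
  shows "(cmod (y - a))\<^sup>2 - (cmod (1 - cnj a * y))\<^sup>2 = ((cmod y)\<^sup>2 - 1) * (1 - (cmod a)\<^sup>2)"
proof -
  have "complex_of_real ((cmod (y - a))\<^sup>2 - (cmod (1 - cnj a * y))\<^sup>2)
      = complex_of_real (((cmod y)\<^sup>2 - 1) * (1 - (cmod a)\<^sup>2))"
    by (simp only: of_real_diff of_real_mult of_real_1 complex_norm_square complex_cnj_diff
        complex_cnj_mult complex_cnj_one complex_cnj_cnj) algebra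
  then show ?thesis by (simp only: of_real_eq_iff)
qed

lemma blaschke_factor_norm_le:
  fixes a y :: complex
  assumes "cmod a < 1" "cmod y \<le> 1"
  shows "cmod (y - a) \<le> cmod (1 - cnj a * y)"
proof -
  have "((cmod y)\<^sup>2 - 1) * (1 - (cmod a)\<^sup>2) \<le> 0"
    using assms by (intro mult_nonpos_nonneg) (auto simp: power_le_one)
  then have "(cmod (y - a))\<^sup>2 \<le> (cmod (1 - cnj a * y))\<^sup>2"
    using blaschke_factor_norm_identity[of y a] by linarith
  then show ?thesis by (rule power2_le_imp_le) simp
qed

lemma blaschke_factor_norm_ge:
  fixes a y :: complex
  assumes "cmod a < 1" "cmod y \<ge> 1"
  shows "cmod (1 - cnj a * y) \<le> cmod (y - a)"
proof -
  have "((cmod y)\<^sup>2 - 1) * (1 - (cmod a)\<^sup>2) \<ge> 0"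
    using assms by (intro mult_nonneg_nonneg) (auto simp: one_le_power power_le_one)
  then have "(cmod (1 - cnj a * y))\<^sup>2 \<le> (cmod (y - a))\<^sup>2"
    using blaschke_factor_norm_identity[of y a] by linarith
  then show ?thesis by (rule power2_le_imp_le) simp
qed

lemma blaschke_factor_denom_nonzero:
  fixes a y :: complex
  assumes "cmod a < 1" "cmod y \<le> 1"
  shows "1 - cnj a * y \<noteq> 0"
proof
  assume "1 - cnj a * y = 0"
  then have "cmod (cnj a * y) = 1" by simp
  then have "cmod a * cmod y = 1" by (simp add: norm_mult)
  moreover have "cmod a * cmod y \<le> cmod a" using assms by (simp add: mult_left_le)
  ultimately show False using assms by simp
qed

lemma blaschke_factor_has_field_derivative:
  fixes a w :: complex
  assumes "1 - cnj a * w \<noteq> 0"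
  shows "((\<lambda>z. (z - a) / (1 - cnj a * z)) has_field_derivative
          (1 - (cmod a)\<^sup>2) / ((1 - cnj a * w) * (1 - cnj a * w))) (at w)"
proof -
  have "((\<lambda>z. z - a) has_field_derivative 1) (at w)"
    and "((\<lambda>z. 1 - cnj a * z) has_field_derivative - cnj a) (at w)"
    by (auto intro!: derivative_eq_intros)
  note quotient_rule = DERIV_divide[OF this assms]
  have "1 * (1 - cnj a * w) - (w - a) * (- cnj a) = 1 - (cmod a)\<^sup>2"
    by (simp add: complex_of_real_norm_square algebra_simps)
  with quotient_rule show ?thesis by (simp only:)
qed

lemma blaschke_factor_log_deriv_on_circle:
  fixes a w :: complex
  assumes "cmod w = 1" "cmod a < 1"
  shows "w * ((1 - (cmod a)\<^sup>2) / ((1 - cnj a * w) * (w - a)))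
         = (1 - (cmod a)\<^sup>2) / (cmod (w - a))\<^sup>2"
proof -
  have "w \<noteq> a" "w \<noteq> 0" using assms by auto
  have "w * cnj w = 1" using assms by (metis complex_of_real_norm_square of_real_1 power_one)
  then have "(1 - cnj a * w) * (w - a) = w * (cmod (w - a))\<^sup>2"
    by (simp add: complex_of_real_norm_square algebra_simps)
  then show ?thesis
    using \<open>w \<noteq> a\<close> \<open>w \<noteq> 0\<close> by (simp add: divide_simps)
qed

lemma blaschke_product_has_field_derivative:
  fixes a :: "nat \<Rightarrow> complex" and w :: complex
  assumes "\<And>k. k < n \<Longrightarrow> 1 - cnj (a k) * w \<noteq> 0 \<and> w \<noteq> a k"
  shows "((\<lambda>z. \<Prod>k<n. (z - a k) / (1 - cnj (a k) * z)) has_field_derivative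
     (\<Prod>k<n. (w - a k) / (1 - cnj (a k) * w)) *
     (\<Sum>k<n. (1 - (cmod (a k))\<^sup>2) / ((1 - cnj (a k) * w) * (w - a k)))) (at w)"
  using assms
proof (induction n)
  case 0
  then show ?case by simp
next
  case (Suc n)
  have denom: "1 - cnj (a n) * w \<noteq> 0" and numer: "w - a n \<noteq> 0" using Suc.prems by auto
  have IH: "((\<lambda>z. \<Prod>k<n. (z - a k) / (1 - cnj (a k) * z)) has_field_derivative
     (\<Prod>k<n. (w - a k) / (1 - cnj (a k) * w)) *
     (\<Sum>k<n. (1 - (cmod (a k))\<^sup>2) / ((1 - cnj (a k) * w) * (w - a k)))) (at w)"
    using Suc by simp
  have product_rule: "P * T * (d / c) + (K / (c * c)) * P = (P * (d / c)) * (T + K / (c * d))"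
    if "c \<noteq> 0" "d \<noteq> 0" for P T K c d :: complex
    using that by (simp add: field_simps)
  show ?case
    using DERIV_mult[OF IH blaschke_factor_has_field_derivative[OF denom]]
    by (simp only: prod.lessThan_Suc sum.lessThan_Suc product_rule[OF denom numer])
qed

subsection \<open>Finite Blaschke products and the equation z B(z) = lam\<close>

definition blaschke :: "complex \<Rightarrow> (nat \<Rightarrow> complex) \<Rightarrow> nat \<Rightarrow> complex \<Rightarrow> complex" where
  "blaschke \<alpha> a n z = \<alpha> * (\<Prod>k<n. (z - a k) / (1 - cnj (a k) * z))"

definition poisson_sum :: "(nat \<Rightarrow> complex) \<Rightarrow> nat \<Rightarrow> complex \<Rightarrow> real" where
  "poisson_sum a n w = (\<Sum>k<n. (1 - (cmod (a k))\<^sup>2) / (cmod (w - a k))\<^sup>2)"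

definition blaschke_numer :: "(nat \<Rightarrow> complex) \<Rightarrow> nat \<Rightarrow> complex poly" where
  "blaschke_numer a n = (\<Prod>k<n. [:- a k, 1:])"

definition blaschke_denom :: "(nat \<Rightarrow> complex) \<Rightarrow> nat \<Rightarrow> complex poly" where
  "blaschke_denom a n = (\<Prod>k<n. [:1, - cnj (a k):])"

text \<open>Cleared of denominators, the equation z B(z) = lam becomes a root of this polynomial.\<close>
definition level_poly :: "complex \<Rightarrow> (nat \<Rightarrow> complex) \<Rightarrow> nat \<Rightarrow> complex \<Rightarrow> complex poly" where
  "level_poly \<alpha> a n lam = smult \<alpha> (pCons 0 (blaschke_numer a n)) - smult lam (blaschke_denom a n)"

locale blaschke_params =
  fixes \<alpha> :: complex and a :: "nat \<Rightarrow> complex" and n :: nat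
  assumes norm_\<alpha>: "cmod \<alpha> = 1" and zeros_in_disc: "\<And>k. k < n \<Longrightarrow> cmod (a k) < 1"
begin

abbreviation B where "B \<equiv> blaschke \<alpha> a n"
abbreviation s where "s \<equiv> poisson_sum a n"

lemma has_field_derivative_on_circle:
  assumes w: "cmod w = 1"
  shows "(B has_field_derivative B w * s w / w) (at w)"
proof -
  let ?L = "\<Sum>k<n. (1 - (cmod (a k))\<^sup>2) / ((1 - cnj (a k) * w) * (w - a k))"
  have "1 - cnj (a k) * w \<noteq> 0 \<and> w \<noteq> a k" if "k < n" for k
    using blaschke_factor_denom_nonzero[of "a k" w] zeros_in_disc[OF that] w by auto
  note D = DERIV_cmult[OF blaschke_product_has_field_derivative[where a = a and n = n, OF this],
      where c = \<alpha>]
  have "w * ?L = s w"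
    unfolding poisson_sum_def sum_distrib_left of_real_sum
  proof (intro sum.cong refl)
    fix k assume "k \<in> {..<n}"
    then show "w * ((1 - (cmod (a k))\<^sup>2) / ((1 - cnj (a k) * w) * (w - a k)))
      = complex_of_real ((1 - (cmod (a k))\<^sup>2) / (cmod (w - a k))\<^sup>2)"
      by (subst blaschke_factor_log_deriv_on_circle[OF w zeros_in_disc]) auto
  qed
  moreover have "w \<noteq> 0" using w by auto
  ultimately have "?L = s w / w" by (simp add: eq_divide_eq mult.commute)
  with D show ?thesis
    unfolding blaschke_def[abs_def] by (simp add: mult.assoc)
qed

lemma norm_blaschke: "cmod (B z) = (\<Prod>k<n. cmod (z - a k) / cmod (1 - cnj (a k) * z))"
  by (simp add: blaschke_def norm_mult prod_norm[symmetric] norm_divide norm_\<alpha>)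

lemma norm_on_circle:
  assumes "cmod w = 1"
  shows "cmod (B w) = 1"
proof -
  have "cmod (w - a k) = cmod (1 - cnj (a k) * w)" "1 - cnj (a k) * w \<noteq> 0" if "k < n" for k
    using blaschke_factor_norm_le blaschke_factor_norm_ge blaschke_factor_denom_nonzero
      zeros_in_disc[OF that] assms by (auto intro: antisym)
  then show ?thesis by (simp add: norm_blaschke)
qed

lemma poisson_sum_nonneg: "0 \<le> s w"
  unfolding poisson_sum_def
  by (intro sum_nonneg divide_nonneg_nonneg) (auto simp: abs_square_le_1 less_imp_le zeros_in_disc)

lemma norm_deriv_on_circle:
  assumes "cmod w = 1"
  shows "cmod (deriv B w) = s w"
  using DERIV_imp_deriv[OF has_field_derivative_on_circle[OF assms]] assms
  by (simp add: norm_mult norm_divide norm_on_circle poisson_sum_nonneg)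

lemma continuous_on_poisson_sum: "continuous_on (sphere 0 1) s"
  unfolding poisson_sum_def
  by (intro continuous_intros) (auto dest: zeros_in_disc)

abbreviation P where "P \<equiv> blaschke_numer a n"
abbreviation Q where "Q \<equiv> blaschke_denom a n"
abbreviation R where "R \<equiv> level_poly \<alpha> a n"

lemma poly_numer: "poly P z = (\<Prod>k<n. z - a k)"
  by (simp add: blaschke_numer_def poly_prod)

lemma poly_denom: "poly Q z = (\<Prod>k<n. 1 - cnj (a k) * z)"
  by (simp add: blaschke_denom_def poly_prod algebra_simps)

lemma poly_level_poly: "poly (R lam) z = \<alpha> * z * poly P z - lam * poly Q z"
  by (simp add: level_poly_def)

lemma blaschke_eq_quotient: "B z = \<alpha> * poly P z / poly Q z"
  by (simp add: blaschke_def poly_numer poly_denom prod_dividef)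

lemma denom_nonzero: "cmod z \<le> 1 \<Longrightarrow> poly Q z \<noteq> 0"
  using blaschke_factor_denom_nonzero zeros_in_disc by (auto simp: poly_denom)

lemma numer_root_in_disc: "poly P z = 0 \<Longrightarrow> cmod z < 1"
  using zeros_in_disc by (auto simp: poly_numer)

lemma degree_denom_le: "degree Q \<le> n"
proof -
  have "degree Q \<le> (\<Sum>k<n. degree [:1, - cnj (a k):])"
    using degree_prod_sum_le[of "{..<n}" "\<lambda>k. [:1, - cnj (a k):]"]
    unfolding blaschke_denom_def by (simp add: o_def)
  also have "\<dots> \<le> (\<Sum>k<n. 1)" by (intro sum_mono) simp
  finally show ?thesis by simp
qed

lemma degree_level_poly: "degree (R lam) = Suc n"
  and lead_coeff_level_poly: "lead_coeff (R lam) = \<alpha>"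
proof -
  have "degree P = n"
    unfolding blaschke_numer_def by (subst degree_prod_eq_sum_degree) auto
  moreover have "lead_coeff P = 1"
    unfolding blaschke_numer_def lead_coeff_prod by simp
  moreover note degree_denom_le
  ultimately have coeff: "coeff (R lam) (Suc n) = \<alpha>" and deg: "degree (R lam) \<le> Suc n"
    by (auto simp: level_poly_def coeff_eq_0 degree_diff_le degree_pCons_le
        intro!: order.trans[OF degree_smult_le])
  moreover have "\<alpha> \<noteq> 0" using norm_\<alpha> by auto
  ultimately show "degree (R lam) = Suc n"
    by (intro antisym le_degree) auto
  with coeff show "lead_coeff (R lam) = \<alpha>" by simp
qed

lemma norm_blaschke_le_1:
  assumes "cmod z \<le> 1"
  shows "cmod (B z) \<le> 1"
  unfolding norm_blaschke
proof (rule prod_le_1)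
  fix k assume "k \<in> {..<n}"
  then have "cmod (z - a k) \<le> cmod (1 - cnj (a k) * z)" "1 - cnj (a k) * z \<noteq> 0"
    using blaschke_factor_norm_le blaschke_factor_denom_nonzero zeros_in_disc assms by auto
  then show "0 \<le> cmod (z - a k) / cmod (1 - cnj (a k) * z) \<and>
      cmod (z - a k) / cmod (1 - cnj (a k) * z) \<le> 1"
    by simp
qed

lemma norm_blaschke_ge_1:
  assumes "1 \<le> cmod z" and "poly Q z \<noteq> 0"
  shows "1 \<le> cmod (B z)"
  unfolding norm_blaschke
proof (rule prod_ge_1)
  fix k assume "k \<in> {..<n}"
  then have "cmod (1 - cnj (a k) * z) \<le> cmod (z - a k)" "1 - cnj (a k) * z \<noteq> 0"
    using blaschke_factor_norm_ge zeros_in_disc assms by (auto simp: poly_denom)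
  then show "1 \<le> cmod (z - a k) / cmod (1 - cnj (a k) * z)"
    by simp
qed

text \<open>Inside the disc |z B(z)| < 1 and outside it |z B(z)| > 1, so all solutions lie on the circle.\<close>
lemma level_poly_root_iff:
  assumes lam: "cmod lam = 1"
  shows "poly (R lam) y = 0 \<longleftrightarrow> cmod y = 1 \<and> y * B y = lam"
proof
  assume root: "poly (R lam) y = 0"
  have Qy: "poly Q y \<noteq> 0"
  proof
    assume Q0: "poly Q y = 0"
    then have "1 < cmod y" using denom_nonzero by force
    moreover from root Q0 have "y = 0 \<or> poly P y = 0"
      using norm_\<alpha> by (auto simp: poly_level_poly)
    ultimately show False using numer_root_in_disc by fastforce
  qed
  with root have yB: "y * B y = lam"
    by (simp add: poly_level_poly blaschke_eq_quotient field_simps)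
  then have prod: "cmod y * cmod (B y) = 1" using lam by (metis norm_mult)
  have "cmod y = 1"
  proof (cases "cmod y \<le> 1")
    case True
    then have "cmod y * cmod (B y) \<le> cmod y"
      using norm_blaschke_le_1 by (simp add: mult_left_le)
    with prod True show ?thesis by simp
  next
    case False
    then have "cmod y \<le> cmod y * cmod (B y)"
      using norm_blaschke_ge_1[OF _ Qy] by (simp add: mult_le_cancel_left1)
    with prod False show ?thesis by simp
  qed
  with yB show "cmod y = 1 \<and> y * B y = lam" by simp
next
  assume "cmod y = 1 \<and> y * B y = lam"
  then show "poly (R lam) y = 0"
    using denom_nonzero[of y] by (auto simp: poly_level_poly blaschke_eq_quotient field_simps)
qed

lemma one_plus_poisson_sum_nonzero: "1 + complex_of_real (s y) \<noteq> 0"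
  using poisson_sum_nonneg[of y] by (simp add: complex_eq_iff)

lemma pderiv_level_poly_at_solution:
  assumes y: "cmod y = 1" and yB: "y * B y = lam"
  shows "poly (pderiv (R lam)) y = poly Q y * B y * (1 + s y)"
proof -
  have Q0: "Q \<noteq> 0" using denom_nonzero[of 0] by auto
  define U where "U = - {z. poly Q z = 0}"
  have U: "open U" "y \<in> U"
    using poly_roots_finite[OF Q0] denom_nonzero y by (auto simp: U_def finite_imp_closed open_Compl)
  have R_on_U: "poly Q z * (z * B z - lam) = poly (R lam) z" if "z \<in> U" for z
    using that by (simp add: U_def poly_level_poly blaschke_eq_quotient field_simps)
  note D = DERIV_mult[OF poly_DERIV[of Q y]
      DERIV_diff[OF DERIV_mult[OF DERIV_ident has_field_derivative_on_circle[OF y]] DERIV_const[of lam]]]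
  have "(poly (R lam) has_field_derivative
      poly (pderiv Q) y * (y * B y - lam) + (1 * B y + B y * s y / y * y - 0) * poly Q y) (at y)"
    by (rule has_field_derivative_transform_within_open[OF D U R_on_U])
  then have "poly (pderiv (R lam)) y
      = poly (pderiv Q) y * (y * B y - lam) + (1 * B y + B y * s y / y * y - 0) * poly Q y"
    by (rule DERIV_unique[OF poly_DERIV])
  with yB y show ?thesis by (auto simp: field_simps)
qed

lemma rsquarefree_level_poly:
  assumes "cmod lam = 1"
  shows "rsquarefree (R lam)"
  unfolding rsquarefree_roots
proof (intro allI notI)
  fix y assume "poly (R lam) y = 0 \<and> poly (pderiv (R lam)) y = 0"
  then have y: "cmod y = 1" "y * B y = lam" and "poly Q y * B y * (1 + s y) = 0"
    using level_poly_root_iff[OF assms] pderiv_level_poly_at_solution by auto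
  moreover have "poly Q y \<noteq> 0" using denom_nonzero y(1) by simp
  moreover have "B y \<noteq> 0" using norm_on_circle[OF y(1)] by auto
  ultimately show False using one_plus_poisson_sum_nonzero by simp
qed

lemma level_poly_factorization:
  assumes "cmod lam = 1"
  shows "R lam = smult \<alpha> (\<Prod>z | cmod z = 1 \<and> z * B z = lam. [:-z, 1:])"
  using complex_poly_decompose_rsquarefree[OF rsquarefree_level_poly[OF assms]]
  by (simp add: level_poly_root_iff[OF assms] lead_coeff_level_poly)

lemma finite_level_set:
  assumes "cmod lam = 1"
  shows "finite {y. cmod y = 1 \<and> y * B y = lam}"
proof -
  have "R lam \<noteq> 0" using degree_level_poly[of lam] by auto
  then show ?thesis
    using poly_roots_finite[of "R lam"] by (simp add: level_poly_root_iff[OF assms])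
qed

text \<open>The Lagrange basis polynomial of a solution y, evaluated at 0, is a ratio of products of
  roots of R; the factorization of R expresses it through R(0) = -lam and R'(y).\<close>
lemma lagrange_weight_at_solution:
  assumes lam: "cmod lam = 1"
  defines "S \<equiv> {y. cmod y = 1 \<and> y * B y = lam}"
  assumes yS: "y \<in> S"
  shows "poly Q y * (\<Prod>z\<in>S-{y}. (0 - z) / (y - z)) = 1 / (1 + s y)"
proof -
  have fin: "finite S" unfolding S_def by (rule finite_level_set[OF lam])
  have factor: "R lam = smult \<alpha> (\<Prod>z\<in>S. [:-z, 1:])"
    unfolding S_def by (rule level_poly_factorization[OF lam])
  have y: "cmod y = 1" "y * B y = lam" using yS by (auto simp: S_def)
  have nonzero: "\<alpha> \<noteq> 0" "y \<noteq> 0" "poly Q y \<noteq> 0" "B y \<noteq> 0" "1 + complex_of_real (s y) \<noteq> 0"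
    using norm_\<alpha> y(1) denom_nonzero[of y] norm_on_circle[OF y(1)] one_plus_poisson_sum_nonzero
    by auto
  have "poly (R lam) 0 = \<alpha> * (\<Prod>z\<in>S. 0 - z)" by (subst factor) (simp add: poly_prod)
  then have "\<alpha> * (- y * (\<Prod>z\<in>S-{y}. 0 - z)) = - lam"
    using prod.remove[OF fin yS, of "\<lambda>z. 0 - z"] by (simp add: poly_level_poly poly_denom)
  then have numer: "(\<Prod>z\<in>S-{y}. 0 - z) = lam / (\<alpha> * y)"
    using nonzero by (simp add: field_simps)
  have "R lam = smult \<alpha> ([:-y, 1:] * (\<Prod>z\<in>S-{y}. [:-z, 1:]))"
    using factor prod.remove[OF fin yS, of "\<lambda>z. [:-z, 1:]"] by simp
  then have "pderiv (R lam) = smult \<alpha> ([:-y, 1:] * pderiv (\<Prod>z\<in>S-{y}. [:-z, 1:])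
      + (\<Prod>z\<in>S-{y}. [:-z, 1:]) * pderiv [:-y, 1:])"
    by (simp only: pderiv_mult pderiv_smult)
  then have "poly (pderiv (R lam)) y = \<alpha> * (\<Prod>z\<in>S-{y}. y - z)"
    by (simp add: pderiv_pCons poly_prod)
  then have denom: "(\<Prod>z\<in>S-{y}. y - z) = poly Q y * B y * (1 + s y) / \<alpha>"
    using pderiv_level_poly_at_solution[OF y] nonzero by (simp add: field_simps)
  have "poly Q y * B y * (1 + s y) \<noteq> 0" using nonzero by simp
  then show ?thesis
    unfolding prod_dividef numer denom using nonzero y(2)[symmetric] by (simp add: field_simps)
qed

text \<open>Lagrange interpolation of Q (degree at most n) at the n + 1 solutions, evaluated at 0,
  where Q(0) = 1.\<close>
theorem level_set_weights:
  assumes lam: "cmod lam = 1"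
  defines "S \<equiv> {y. cmod y = 1 \<and> y * B y = lam}"
  shows "finite S" and "card S = Suc n" and "(\<Sum>y\<in>S. 1 / (1 + s y)) = 1"
proof -
  show fin: "finite S" unfolding S_def by (rule finite_level_set[OF lam])
  have "degree (R lam) = card S"
    using norm_\<alpha> unfolding S_def
    by (subst level_poly_factorization[OF lam]) (auto simp: degree_prod_eq_sum_degree)
  then show card: "card S = Suc n" using degree_level_poly by simp
  have "1 = poly Q 0" by (simp add: poly_denom)
  also have "\<dots> = (\<Sum>y\<in>S. poly Q y * (\<Prod>z\<in>S-{y}. (0 - z) / (y - z)))"
    using degree_denom_le card by (intro poly_eq_lagrange_interpolation fin) simp
  also have "\<dots> = complex_of_real (\<Sum>y\<in>S. 1 / (1 + s y))"
    unfolding of_real_sum S_def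
    by (intro sum.cong refl) (subst lagrange_weight_at_solution[OF lam], auto)
  finally show "(\<Sum>y\<in>S. 1 / (1 + s y)) = 1"
    by (metis of_real_eq_1_iff)
qed

end

subsection \<open>Extremal Blaschke products\<close>

lemma is_blaschke_iff_params:
  "is_blaschke B n \<longleftrightarrow> (\<exists>\<alpha> a. blaschke_params \<alpha> a n \<and> B = blaschke \<alpha> a n)"
  unfolding is_blaschke_def blaschke_params_def blaschke_def[abs_def] by auto

lemma is_blaschke_norm_on_circle:
  assumes "is_blaschke B n" "cmod w = 1"
  shows "cmod (B w) = 1"
  using assms blaschke_params.norm_on_circle unfolding is_blaschke_iff_params by blast

lemma is_blaschke_continuous_on_norm_deriv:
  assumes "is_blaschke B n"
  shows "continuous_on (sphere 0 1) (\<lambda>z. cmod (deriv B z))"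
proof -
  obtain \<alpha> a where params: "blaschke_params \<alpha> a n" and B: "B = blaschke \<alpha> a n"
    using assms unfolding is_blaschke_iff_params by blast
  interpret blaschke_params \<alpha> a n by (fact params)
  show ?thesis
    using continuous_on_poisson_sum
    by (rule continuous_on_cong[THEN iffD1, rotated 2]) (auto simp: B norm_deriv_on_circle)
qed

lemma is_blaschke_level_set_weights:
  assumes "is_blaschke B n" "cmod lam = 1"
  defines "S \<equiv> {y. cmod y = 1 \<and> y * B y = lam}"
  shows "finite S" and "card S = Suc n" and "(\<Sum>y\<in>S. 1 / (1 + cmod (deriv B y))) = 1"
proof -
  obtain \<alpha> a where params: "blaschke_params \<alpha> a n" and B: "B = blaschke \<alpha> a n"
    using assms unfolding is_blaschke_iff_params by blast
  interpret blaschke_params \<alpha> a n by (fact params)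
  show "finite S" "card S = Suc n"
    using level_set_weights[OF assms(2)] by (simp_all add: S_def B)
  have "(\<Sum>y\<in>S. 1 / (1 + cmod (deriv B y))) = (\<Sum>y\<in>S. 1 / (1 + s y))"
    by (intro sum.cong refl) (simp add: S_def B norm_deriv_on_circle)
  also have "\<dots> = 1"
    using level_set_weights(3)[OF assms(2)] by (simp add: S_def B)
  finally show "(\<Sum>y\<in>S. 1 / (1 + cmod (deriv B y))) = 1" .
qed

lemma is_blaschke_mmin_Mmax_attained:
  assumes "is_blaschke B n"
  shows "\<exists>w. cmod w = 1 \<and> cmod (deriv B w) = mmin B
           \<and> (\<forall>y. cmod y = 1 \<longrightarrow> mmin B \<le> cmod (deriv B y))"
    and "\<exists>w. cmod w = 1 \<and> cmod (deriv B w) = Mmax B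
           \<and> (\<forall>y. cmod y = 1 \<longrightarrow> cmod (deriv B y) \<le> Mmax B)"
  using continuous_attains_INF_SUP[OF _ _ is_blaschke_continuous_on_norm_deriv[OF assms]]
  unfolding mmin_def Mmax_def by fastforce+

lemma degree_le_Mmax:
  assumes B: "is_blaschke B n"
  shows "real n \<le> Mmax B"
proof -
  define S where "S = {y. cmod y = 1 \<and> y * B y = 1}"
  note level = is_blaschke_level_set_weights[OF B norm_one, folded S_def]
  obtain w where "cmod (deriv B w) = Mmax B" and M: "\<And>y. cmod y = 1 \<Longrightarrow> cmod (deriv B y) \<le> Mmax B"
    using is_blaschke_mmin_Mmax_attained(2)[OF B] by blast
  then have "0 \<le> Mmax B" by (metis norm_ge_zero)
  have "real (Suc n) * (1 / (1 + Mmax B)) = (\<Sum>y\<in>S. 1 / (1 + Mmax B))"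
    using level(2) by simp
  also have "\<dots> \<le> (\<Sum>y\<in>S. 1 / (1 + cmod (deriv B y)))"
    using M by (intro sum_mono frac_le) (auto simp: S_def add_pos_nonneg)
  also have "\<dots> = 1" by (rule level(3))
  finally have "real (Suc n) / (1 + Mmax B) \<le> 1" by simp
  with \<open>0 \<le> Mmax B\<close> show ?thesis by (simp add: pos_divide_le_eq)
qed

lemma is_blaschke_level_set_through:
  assumes B: "is_blaschke B n" and w: "cmod w = 1"
  defines "S \<equiv> {y. cmod y = 1 \<and> y * B y = w * B w}"
  shows "finite S" and "w \<in> S" and "card (S - {w}) = n"
    and "(\<Sum>y\<in>S-{w}. 1 / (1 + cmod (deriv B y))) = 1 - 1 / (1 + cmod (deriv B w))"
proof -
  have "cmod (w * B w) = 1" using is_blaschke_norm_on_circle[OF B w] w by (simp add: norm_mult)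
  note level = is_blaschke_level_set_weights[OF B this]
  show fin: "finite S" using level(1) by (simp add: S_def)
  show wS: "w \<in> S" using w by (simp add: S_def)
  show "card (S - {w}) = n" using level(2) fin wS by (simp add: S_def)
  have "(\<Sum>y\<in>S. 1 / (1 + cmod (deriv B y))) = 1" using level(3) by (simp add: S_def)
  then show "(\<Sum>y\<in>S-{w}. 1 / (1 + cmod (deriv B y))) = 1 - 1 / (1 + cmod (deriv B w))"
    using sum.remove[OF fin wS, of "\<lambda>y. 1 / (1 + cmod (deriv B y))"] by linarith
qed

lemma extremal_pointsI:
  assumes fin: "finite S" and w: "w \<in> S" and card: "card (S - {w}) = n" and lam: "cmod lam = 1"
    and S: "\<And>y. y \<in> S \<Longrightarrow> cmod y = 1 \<and> y * B y = lam"
    and deriv_w: "cmod (deriv B w) = real n / (\<nu> + 1)"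
    and deriv_others: "\<And>y. y \<in> S - {w} \<Longrightarrow> cmod (deriv B y) = real n + \<nu>"
  shows "extremal_points B n \<nu>"
proof -
  obtain h where h: "bij_betw h {1..n} (S - {w})"
    using ex_bij_betw_nat_finite_1[of "S - {w}"] fin card by auto
  define z where "z = h(0 := w)"
  have z_h: "z k = h k" if "k \<in> {1..n}" for k using that by (simp add: z_def)
  have z_others: "z ` {1..n} = S - {w}"
  proof -
    have "z ` {1..n} = h ` {1..n}" by (rule image_cong[OF refl z_h])
    then show ?thesis using bij_betw_imp_surj_on[OF h] by simp
  qed
  have "inj_on z {1..n}"
    using inj_on_cong[of "{1..n}" z h] z_h bij_betw_imp_inj_on[OF h] by blast
  moreover have "z 0 \<notin> z ` {1..n}" using z_others by (simp add: z_def)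
  moreover have "{0..n} = insert 0 {1..n}" by auto
  ultimately have "inj_on z {0..n}" by simp
  moreover have "z k \<in> S" if "k \<le> n" for k
  proof (cases "k = 0")
    case True then show ?thesis using w by (simp add: z_def)
  next
    case False then show ?thesis using that z_others by auto
  qed
  ultimately show ?thesis
    unfolding extremal_points_def
  proof (intro exI[of _ lam] exI[of _ z] conjI ballI allI impI)
    show "cmod (deriv B (z 0)) = real n / (\<nu> + 1)" using deriv_w by (simp add: z_def)
    show "cmod (deriv B (z k)) = real n + \<nu>" if "k \<in> {1..n}" for k
      using deriv_others z_others that by blast
  qed (use lam S in blast)+
qed

lemma extremal_points_first_kind:
  assumes B: "is_blaschke B n" and extremal: "mmin B = real n / (Mmax B - real n + 1)"
  shows "extremal_points B n (Mmax B - real n)"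
proof -
  obtain w where w: "cmod w = 1" "cmod (deriv B w) = mmin B"
    using is_blaschke_mmin_Mmax_attained(1)[OF B] by blast
  have le_M: "cmod (deriv B y) \<le> Mmax B" if "cmod y = 1" for y
    using is_blaschke_mmin_Mmax_attained(2)[OF B] that by blast
  define S where "S = {y. cmod y = 1 \<and> y * B y = w * B w}"
  note level = is_blaschke_level_set_through[OF B w(1), folded S_def]
  have "0 < Mmax B - real n + 1" using degree_le_Mmax[OF B] by simp
  then have "1 - 1 / (1 + mmin B) = real n / (1 + Mmax B)"
    unfolding extremal by (simp add: field_simps)
  then have sum_le: "(\<Sum>y\<in>S-{w}. 1 / (1 + cmod (deriv B y))) \<le> (\<Sum>y\<in>S-{w}. 1 / (1 + Mmax B))"
    using level(3,4) w(2) by simp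
  have bound: "1 / (1 + Mmax B) \<le> 1 / (1 + cmod (deriv B y))" if "y \<in> S - {w}" for y
    using le_M that by (intro frac_le) (auto simp: S_def add_pos_nonneg)
  have "1 / (1 + Mmax B) = 1 / (1 + cmod (deriv B y))" if "y \<in> S - {w}" for y
    using sum_mono_imp_eq[OF finite_Diff[OF level(1)] bound sum_le that] .
  then have "cmod (deriv B y) = real n + (Mmax B - real n)" if "y \<in> S - {w}" for y
    using that by simp
  then show ?thesis
    using level(1-3) w extremal is_blaschke_norm_on_circle[OF B w(1)]
    by (intro extremal_pointsI[of S w]) (auto simp: S_def norm_mult)
qed

lemma extremal_points_second_kind:
  assumes B: "is_blaschke B n" and extremal: "mmin B = real n - 1 + real n / Mmax B"
  shows "extremal_points B n (mmin B - real n)"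
proof -
  obtain w where w: "cmod w = 1" "cmod (deriv B w) = Mmax B"
    using is_blaschke_mmin_Mmax_attained(2)[OF B] by blast
  obtain w' where "cmod (deriv B w') = mmin B"
    and m_le: "\<And>y. cmod y = 1 \<Longrightarrow> mmin B \<le> cmod (deriv B y)"
    using is_blaschke_mmin_Mmax_attained(1)[OF B] by blast
  then have "0 \<le> mmin B" by (metis norm_ge_zero)
  have "n \<noteq> 0"
  proof
    assume "n = 0"
    with extremal have "mmin B = -1" by simp
    with \<open>0 \<le> mmin B\<close> show False by simp
  qed
  then have "0 < Mmax B" using degree_le_Mmax[OF B] by linarith
  define S where "S = {y. cmod y = 1 \<and> y * B y = w * B w}"
  note level = is_blaschke_level_set_through[OF B w(1), folded S_def]
  have "1 + mmin B = real n * (1 + Mmax B) / Mmax B"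
    using \<open>0 < Mmax B\<close> unfolding extremal by (simp add: field_simps)
  then have "1 - 1 / (1 + Mmax B) = real n / (1 + mmin B)"
    using \<open>0 < Mmax B\<close> \<open>0 \<le> mmin B\<close> by (simp add: field_simps)
  then have sum_le: "(\<Sum>y\<in>S-{w}. 1 / (1 + mmin B)) \<le> (\<Sum>y\<in>S-{w}. 1 / (1 + cmod (deriv B y)))"
    using level(3,4) w(2) by simp
  have bound: "1 / (1 + cmod (deriv B y)) \<le> 1 / (1 + mmin B)" if "y \<in> S - {w}" for y
    using m_le that \<open>0 \<le> mmin B\<close> by (intro frac_le) (auto simp: S_def)
  have "1 / (1 + cmod (deriv B y)) = 1 / (1 + mmin B)" if "y \<in> S - {w}" for y
    using sum_mono_imp_eq[OF finite_Diff[OF level(1)] bound sum_le that] .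
  then have "cmod (deriv B y) = real n + (mmin B - real n)" if "y \<in> S - {w}" for y
    using that by simp
  moreover have "cmod (deriv B w) = real n / (mmin B - real n + 1)"
    using \<open>0 < Mmax B\<close> \<open>n \<noteq> 0\<close> w(2) by (simp add: extremal)
  ultimately show ?thesis
    using level(1-3) w is_blaschke_norm_on_circle[OF B w(1)]
    by (intro extremal_pointsI[of S w]) (auto simp: S_def norm_mult)
qed

theorem lemma9:
  fixes B :: "complex \<Rightarrow> complex" and n :: nat
  assumes "is_blaschke B n"
  shows "(mmin B = real n / (Mmax B - real n + 1) \<longrightarrow> extremal_points B n (Mmax B - real n))
       \<and> (mmin B = real n - 1 + real n / Mmax B \<longrightarrow> extremal_points B n (mmin B - real n))"
  using extremal_points_first_kind[OF assms] extremal_points_second_kind[OF assms] by blast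

end
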